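(* Let $G$ and $H$ be graphs. Suppose that for every vertex $v \in V(H)$ there exists a subgraph embedding $\varphi_v$ of $H$ into $G$ that is induced with respect to $v$. Then $G \xrightarrow{\cap} H$.
   Context: All graphs are finite and simple. For graphs $G_1=(V_1,E_1)$, $G_2=(V_2,E_2)$, their intersection is $G_1\cap G_2=(V_1\cap V_2, E_1\cap E_2)$. For a graph $G=(V,E)$ and an injective map $\alpha$ defined on $V$, $G^{\alpha}$ is the graph with vertex set $\{\alpha(v): v\in V\}$ and edge set $\{\{\alpha(v),\alpha(w)\}: \{v,w\}\in E\}$. We write $G\xrightarrow{\cap} H$ ($H$ is a self-intersection, or si-subgraph, of $G$) if there exist $k\ge 1$ and injective maps $\alpha_1,\dots,\alpha_k$ on $V(G)$ with $H=G^{\alpha_1}\cap\cdots\cap G^{\alpha_k}$; when $H$ is only specified up to isomorphism, this means $H$ is isomorphic to such an intersection. A subgraph embedding of $H$ into $G$ is an injective map $\varphi: V(H)\to V(G)$ such that $\varphi(u)\varphi(w)\in E(G)$ whenever $uw\in E(H)$. It is induced with respect to $v\in V(H)$ if $\varphi(N_H(v)) = N_G(\varphi(v))\cap \varphi(V(H))$. *)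

theory Defs
  imports Main
begin

type_synonym 'a graph = "'a set \<times> 'a set set"

abbreviation verts :: "'a graph \<Rightarrow> 'a set" where "verts G \<equiv> fst G"
abbreviation edges :: "'a graph \<Rightarrow> 'a set set" where "edges G \<equiv> snd G"

definition wf_graph :: "'a graph \<Rightarrow> bool" where
  "wf_graph G \<longleftrightarrow> finite (verts G) \<and>
     (\<forall>e\<in>edges G. \<exists>u v. e = {u, v} \<and> u \<noteq> v \<and> u \<in> verts G \<and> v \<in> verts G)"

definition graph_image :: "('a \<Rightarrow> 'c) \<Rightarrow> 'a graph \<Rightarrow> 'c graph" where
  "graph_image \<alpha> G = (\<alpha> ` verts G, (\<lambda>e. \<alpha> ` e) ` edges G)"

definition graph_Inter :: "nat \<Rightarrow> (nat \<Rightarrow> 'c graph) \<Rightarrow> 'c graph" where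
  "graph_Inter k Gs = ((\<Inter>i<k. verts (Gs i)), (\<Inter>i<k. edges (Gs i)))"

definition graph_iso :: "'b graph \<Rightarrow> 'c graph \<Rightarrow> bool" where
  "graph_iso H I \<longleftrightarrow> (\<exists>f. bij_betw f (verts H) (verts I) \<and>
     (\<forall>u\<in>verts H. \<forall>w\<in>verts H. {u, w} \<in> edges H \<longleftrightarrow> {f u, f w} \<in> edges I))"

text \<open>G \<rightarrow>\<inter> H (H up to isomorphism); the maps alpha_i take values in the
  vertex universe 'c, given as a type parameter.\<close>
definition si_subgraph :: "'a graph \<Rightarrow> 'b graph \<Rightarrow> 'c itself \<Rightarrow> bool" where
  "si_subgraph G H (_ :: 'c itself) \<longleftrightarrow>
     (\<exists>k (\<alpha> :: nat \<Rightarrow> 'a \<Rightarrow> 'c). k \<ge> 1 \<and> (\<forall>i<k. inj_on (\<alpha> i) (verts G)) \<and>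
        graph_iso H (graph_Inter k (\<lambda>i. graph_image (\<alpha> i) G)))"

definition nbhd :: "'a graph \<Rightarrow> 'a \<Rightarrow> 'a set" where
  "nbhd G v = {w \<in> verts G. {v, w} \<in> edges G}"

definition subgraph_embedding :: "('b \<Rightarrow> 'a) \<Rightarrow> 'b graph \<Rightarrow> 'a graph \<Rightarrow> bool" where
  "subgraph_embedding \<phi> H G \<longleftrightarrow> inj_on \<phi> (verts H) \<and> \<phi> ` verts H \<subseteq> verts G \<and>
     (\<forall>u\<in>verts H. \<forall>w\<in>verts H. {u, w} \<in> edges H \<longrightarrow> {\<phi> u, \<phi> w} \<in> edges G)"

definition induced_wrt :: "('b \<Rightarrow> 'a) \<Rightarrow> 'b graph \<Rightarrow> 'a graph \<Rightarrow> 'b \<Rightarrow> bool" where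
  "induced_wrt \<phi> H G v \<longleftrightarrow> \<phi> ` nbhd H v = nbhd G (\<phi> v) \<inter> \<phi> ` verts H"

end

theory Submission
  imports Defs "HOL-Library.Countable_Set"
begin

text \<open>Choose embeddings \<open>\<psi>\<^sub>i\<close> of \<open>H\<close> into \<open>G\<close> such that every vertex \<open>u\<close> of \<open>H\<close> has
  one that is induced with respect to \<open>u\<close>. Relabel \<open>G\<close> along each \<open>\<psi>\<^sub>i\<close>: the vertex \<open>\<psi>\<^sub>i u\<close>
  receives a label \<open>f u\<close> common to all copies, every other vertex a label private to \<open>i\<close>.
  Already two relabelled copies intersect exactly in the common labels; every edge of \<open>H\<close>
  survives in all copies, while a non-edge \<open>{u, w}\<close> of \<open>H\<close> is missing from the copy of an
  embedding induced with respect to \<open>u\<close>, because there \<open>\<psi> w\<close> is not adjacent to \<open>\<psi> u\<close>.\<close>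

definition relabel :: "('b \<Rightarrow> 'a) \<Rightarrow> 'b set \<Rightarrow> ('b \<Rightarrow> 'c) \<Rightarrow> ('a \<Rightarrow> 'c) \<Rightarrow> 'a \<Rightarrow> 'c" where
  "relabel \<psi> V f c x = (if x \<in> \<psi> ` V then f (inv_into V \<psi> x) else c x)"

lemma relabel_image:
  "inj_on \<psi> V \<Longrightarrow> u \<in> V \<Longrightarrow> relabel \<psi> V f c (\<psi> u) = f u"
  by (simp add: relabel_def)

lemma relabel_outside: "x \<notin> \<psi> ` V \<Longrightarrow> relabel \<psi> V f c x = c x"
  by (simp add: relabel_def)

lemma relabel_in_common_labels:
  assumes "f ` V \<inter> range c = {}" and "relabel \<psi> V f c x \<in> f ` V"
  shows "x \<in> \<psi> ` V"
  using assms unfolding relabel_def by (metis disjoint_iff image_eqI rangeI)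

lemma relabel_common_label:
  "z \<in> \<psi> ` V \<Longrightarrow> relabel \<psi> V f c z \<in> f ` V"
  by (simp add: relabel_def inv_into_into)

lemma relabel_cases: "relabel \<psi> V f c x \<in> f ` V \<or> relabel \<psi> V f c x = c x"
  by (simp add: relabel_def inv_into_into)

lemma inj_on_relabel:
  assumes "inj_on \<psi> V" "inj_on f V" "inj_on c A" "f ` V \<inter> range c = {}"
  shows "inj_on (relabel \<psi> V f c) A"
proof (rule inj_onI)
  fix x y assume "x \<in> A" "y \<in> A" and eq: "relabel \<psi> V f c x = relabel \<psi> V f c y"
  then have same_side: "x \<in> \<psi> ` V \<longleftrightarrow> y \<in> \<psi> ` V"
    using relabel_common_label relabel_in_common_labels[OF assms(4)] by metis
  show "x = y"
  proof (cases "x \<in> \<psi> ` V")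
    case True
    with same_side obtain x' y' where "x' \<in> V" "y' \<in> V" "x = \<psi> x'" "y = \<psi> y'" by blast
    with eq assms(1,2) show ?thesis by (simp add: relabel_image inj_on_eq_iff)
  next
    case False
    with same_side eq \<open>x \<in> A\<close> \<open>y \<in> A\<close> assms(3) show ?thesis
      by (simp add: relabel_outside inj_on_eq_iff)
  qed
qed

lemma subgraph_embedding_of_empty: "verts H = {} \<Longrightarrow> subgraph_embedding \<phi> H G"
  by (simp add: subgraph_embedding_def)

lemma edges_graph_Inter: "edges (graph_Inter k Gs) = (\<Inter>i<k. edges (Gs i))"
  by (simp add: graph_Inter_def)

lemma edge_in_graph_image_relabel:
  assumes "subgraph_embedding \<psi> H G" "u \<in> verts H" "w \<in> verts H" "{u, w} \<in> edges H"
  shows "{f u, f w} \<in> edges (graph_image (relabel \<psi> (verts H) f c) G)"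
proof -
  have "{\<psi> u, \<psi> w} \<in> edges G" and "inj_on \<psi> (verts H)"
    using assms unfolding subgraph_embedding_def by auto
  moreover have "relabel \<psi> (verts H) f c ` {\<psi> u, \<psi> w} = {f u, f w}"
    using \<open>inj_on \<psi> (verts H)\<close> assms(2,3) by (simp add: relabel_image)
  ultimately show ?thesis unfolding graph_image_def by (metis rev_image_eqI snd_conv)
qed

lemma non_edge_notin_graph_image_relabel:
  assumes emb: "subgraph_embedding \<psi> H G" and ind: "induced_wrt \<psi> H G u"
    and "u \<in> verts H" "w \<in> verts H" "{u, w} \<notin> edges H"
    and f: "inj_on f (verts H)" and fc: "f ` verts H \<inter> range c = {}"
  shows "{f u, f w} \<notin> edges (graph_image (relabel \<psi> (verts H) f c) G)"
proof
  let ?\<alpha> = "relabel \<psi> (verts H) f c"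
  assume "{f u, f w} \<in> edges (graph_image ?\<alpha> G)"
  then obtain \<epsilon> where \<epsilon>: "\<epsilon> \<in> edges G" "?\<alpha> ` \<epsilon> = {f u, f w}"
    unfolding graph_image_def by auto
  have \<psi>: "inj_on \<psi> (verts H)" "\<psi> ` verts H \<subseteq> verts G"
    using emb unfolding subgraph_embedding_def by auto
  define S where "S = {s \<in> verts H. \<psi> s \<in> \<epsilon>}"
  have "\<epsilon> \<subseteq> \<psi> ` verts H"
    using \<epsilon>(2) \<open>u \<in> verts H\<close> \<open>w \<in> verts H\<close> relabel_in_common_labels[OF fc] by blast
  then have \<epsilon>_S: "\<epsilon> = \<psi> ` S" unfolding S_def by auto
  have "?\<alpha> ` \<epsilon> = f ` S"
    unfolding \<epsilon>_S image_image using \<psi>(1) by (intro image_cong) (auto simp: S_def relabel_image)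
  with \<epsilon>(2) have "f ` S = f ` {u, w}" by simp
  then have "S = {u, w}"
    using f \<open>u \<in> verts H\<close> \<open>w \<in> verts H\<close> by (subst (asm) inj_on_image_eq_iff) (auto simp: S_def)
  then have "\<psi> w \<in> nbhd G (\<psi> u) \<inter> \<psi> ` verts H"
    using \<epsilon>(1) \<epsilon>_S \<psi>(2) \<open>w \<in> verts H\<close> by (auto simp: nbhd_def)
  then have "\<psi> w \<in> \<psi> ` nbhd H u"
    using ind unfolding induced_wrt_def by simp
  then have "w \<in> nbhd H u"
    using \<psi>(1) \<open>w \<in> verts H\<close> by (subst (asm) inj_on_image_mem_iff) (auto simp: nbhd_def)
  with \<open>{u, w} \<notin> edges H\<close> show False by (simp add: nbhd_def)
qed

lemma Inter_relabel_images:
  fixes k :: nat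
  assumes "2 \<le> k" "\<forall>i<k. inj_on (\<psi> i) V \<and> \<psi> i ` V \<subseteq> A"
    and "range (c 0) \<inter> range (c 1) = {}"
  shows "(\<Inter>i<k. relabel (\<psi> i) V f (c i) ` A) = f ` V"
proof
  show "f ` V \<subseteq> (\<Inter>i<k. relabel (\<psi> i) V f (c i) ` A)"
    using assms(2) by (force simp: relabel_image)
next
  show "(\<Inter>i<k. relabel (\<psi> i) V f (c i) ` A) \<subseteq> f ` V"
  proof
    fix y assume "y \<in> (\<Inter>i<k. relabel (\<psi> i) V f (c i) ` A)"
    with assms(1) have "y \<in> relabel (\<psi> 0) V f (c 0) ` A" "y \<in> relabel (\<psi> 1) V f (c 1) ` A"
      by auto
    then obtain x0 x1 where "y = relabel (\<psi> 0) V f (c 0) x0" "y = relabel (\<psi> 1) V f (c 1) x1"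
      by blast
    then show "y \<in> f ` V"
      using assms(3) relabel_cases by (metis disjoint_iff rangeI)
  qed
qed

lemma si_subgraph_if_embedding_cover:
  fixes G :: "'a graph" and H :: "'b graph" and k :: nat
  assumes "countable (verts G)" "countable (verts H)" "2 \<le> k"
    and emb: "\<forall>i<k. subgraph_embedding (\<psi> i) H G"
    and cover: "\<forall>u\<in>verts H. \<exists>i<k. induced_wrt (\<psi> i) H G u"
  shows "si_subgraph G H TYPE(nat)"
proof -
  define f where "f u = 2 * to_nat_on (verts H) u" for u
  define c where "c i x = 2 * prod_encode (i, to_nat_on (verts G) x) + 1" for i x
  define \<alpha> where "\<alpha> i = relabel (\<psi> i) (verts H) f (c i)" for i
  let ?I = "graph_Inter k (\<lambda>i. graph_image (\<alpha> i) G)"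
  have fc: "f ` verts H \<inter> range (c i) = {}" for i
    unfolding f_def c_def by (auto simp: disjoint_iff) presburger
  have f: "inj_on f (verts H)"
    using assms(2) unfolding f_def inj_on_def by simp
  have c: "inj_on (c i) (verts G)" for i
    using assms(1) unfolding c_def inj_on_def by simp
  have \<psi>: "inj_on (\<psi> i) (verts H) \<and> \<psi> i ` verts H \<subseteq> verts G" if "i < k" for i
    using emb that unfolding subgraph_embedding_def by blast
  have \<alpha>: "\<forall>i<k. inj_on (\<alpha> i) (verts G)"
    unfolding \<alpha>_def using \<psi> f c fc by (blast intro: inj_on_relabel)
  have "(\<Inter>i<k. \<alpha> i ` verts G) = f ` verts H"
    unfolding \<alpha>_def using \<psi> by (intro Inter_relabel_images[OF \<open>2 \<le> k\<close>]) (auto simp: c_def)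
  then have "verts ?I = f ` verts H"
    by (simp add: graph_Inter_def graph_image_def)
  moreover have "{u, w} \<in> edges H \<longleftrightarrow> {f u, f w} \<in> edges ?I"
    if u: "u \<in> verts H" and w: "w \<in> verts H" for u w
  proof
    assume "{u, w} \<in> edges H"
    then show "{f u, f w} \<in> edges ?I"
      using u w emb unfolding edges_graph_Inter \<alpha>_def by (auto intro: edge_in_graph_image_relabel)
  next
    assume "{f u, f w} \<in> edges ?I"
    moreover obtain i where "i < k" and ind: "induced_wrt (\<psi> i) H G u"
      using cover u by blast
    ultimately have "{f u, f w} \<in> edges (graph_image (\<alpha> i) G)"
      unfolding edges_graph_Inter by blast
    then show "{u, w} \<in> edges H"
      using non_edge_notin_graph_image_relabel[OF _ ind u w _ f fc] emb \<open>i < k\<close>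
      unfolding \<alpha>_def by blast
  qed
  ultimately have "graph_iso H ?I"
    using f unfolding graph_iso_def bij_betw_def by blast
  with \<open>2 \<le> k\<close> \<alpha> show ?thesis
    unfolding si_subgraph_def by (intro exI[of _ k] exI[of _ \<alpha>]) simp
qed

lemma embedding_cover_exists:
  assumes "finite (verts H)"
    and "\<forall>v\<in>verts H. \<exists>\<phi>. subgraph_embedding \<phi> H G \<and> induced_wrt \<phi> H G v"
  obtains k :: nat and \<psi> where "2 \<le> k" "\<forall>i<k. subgraph_embedding (\<psi> i) H G"
    "\<forall>u\<in>verts H. \<exists>i<k. induced_wrt (\<psi> i) H G u"
proof -
  obtain \<Phi> where \<Phi>: "\<And>v. v \<in> verts H \<Longrightarrow> subgraph_embedding (\<Phi> v) H G \<and> induced_wrt (\<Phi> v) H G v"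
    using assms(2) by metis
  define \<psi> where "\<psi> i = \<Phi> (from_nat_into (verts H) i)" for i
  have "subgraph_embedding (\<psi> i) H G" for i
    using \<Phi> from_nat_into subgraph_embedding_of_empty unfolding \<psi>_def by metis
  moreover have "\<exists>i<card (verts H). induced_wrt (\<psi> i) H G u" if "u \<in> verts H" for u
  proof (intro exI conjI)
    show "to_nat_on (verts H) u < card (verts H)"
      using to_nat_on_finite[OF assms(1)] that by (auto dest: bij_betwE)
    show "induced_wrt (\<psi> (to_nat_on (verts H) u)) H G u"
      using \<Phi> that countable_finite[OF assms(1)] unfolding \<psi>_def by simp
  qed
  ultimately show thesis
    by (intro that[of "max 2 (card (verts H))" \<psi>]) (auto simp: less_max_iff_disj)
qed

theorem mainTheorem1:
  fixes G :: "'a graph" and H :: "'b graph"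
  assumes "wf_graph G" and "wf_graph H"
    and "\<forall>v\<in>verts H. \<exists>\<phi>. subgraph_embedding \<phi> H G \<and> induced_wrt \<phi> H G v"
  shows "si_subgraph G H TYPE(nat)"
proof -
  have "finite (verts G)" "finite (verts H)"
    using assms(1,2) unfolding wf_graph_def by auto
  moreover obtain k :: nat and \<psi> where "2 \<le> k" "\<forall>i<k. subgraph_embedding (\<psi> i) H G"
    "\<forall>u\<in>verts H. \<exists>i<k. induced_wrt (\<psi> i) H G u"
    using embedding_cover_exists[OF _ assms(3)] \<open>finite (verts H)\<close> by blast
  ultimately show ?thesis
    by (intro si_subgraph_if_embedding_cover) (auto intro: countable_finite)
qed

end
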